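(* For every $\alpha<1$ and $\lambda>0$ we have $\mathbb P_{\alpha,\lambda}(\text{percolation})=1$.
   Context: For a countable set $P\subseteq\mathbb R\times[0,\infty)$, $\Gamma(P)$ denotes the graph on vertex set $P$ in which distinct points $(x,y),(x',y')$ are adjacent iff $|x-x'|<e^{\frac12(y+y')}$. For $\alpha,\lambda>0$, $\mathcal P_{\alpha,\lambda}$ is a Poisson point process on $\mathbb R\times[0,\infty)$ with intensity function $\lambda e^{-\alpha y}$, $\mathbb P_{\alpha,\lambda}$ its law, and "percolation" is the event that $\Gamma(\mathcal P_{\alpha,\lambda})$ has an infinite connected component. *)

theory Defs
  imports "HOL-Probability.Probability"
begin

definition gamma_adj :: "(real \<times> real) set \<Rightarrow> real \<times> real \<Rightarrow> real \<times> real \<Rightarrow> bool" where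
  "gamma_adj P p q \<longleftrightarrow> p \<in> P \<and> q \<in> P \<and> p \<noteq> q \<and>
     \<bar>fst p - fst q\<bar> < exp ((snd p + snd q) / 2)"

definition gamma_component :: "(real \<times> real) set \<Rightarrow> real \<times> real \<Rightarrow> (real \<times> real) set" where
  "gamma_component P p = {q. (gamma_adj P)\<^sup>*\<^sup>* p q}"

definition percolates :: "(real \<times> real) set \<Rightarrow> bool" where
  "percolates P \<longleftrightarrow> (\<exists>p\<in>P. infinite (gamma_component P p))"

definition ppp_mean :: "real \<Rightarrow> real \<Rightarrow> (real \<times> real) set \<Rightarrow> ennreal" where
  "ppp_mean alpha lam B =
     (\<integral>\<^sup>+ z. indicator (B \<inter> (UNIV \<times> {0..})) z * ennreal (lam * exp (- alpha * snd z)) \<partial>lborel)"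

definition poisson_point_process ::
  "'a measure \<Rightarrow> real \<Rightarrow> real \<Rightarrow> ('a \<Rightarrow> (real \<times> real) set) \<Rightarrow> bool" where
  "poisson_point_process M alpha lam N \<longleftrightarrow>
     prob_space M \<and>
     (\<forall>\<omega>\<in>space M. N \<omega> \<subseteq> UNIV \<times> {0..}) \<and>
     (\<forall>(Bs :: (real \<times> real) set list) (ks :: nat list).
        length ks = length Bs \<and>
        (\<forall>B\<in>set Bs. B \<in> sets borel \<and> B \<subseteq> UNIV \<times> {0..} \<and> ppp_mean alpha lam B < \<infinity>) \<and>
        disjoint_family_on (\<lambda>i. Bs ! i) {..<length Bs} \<longrightarrow>
        (let E = {\<omega>\<in>space M. \<forall>i<length Bs. finite (N \<omega> \<inter> Bs ! i) \<and> card (N \<omega> \<inter> Bs ! i) = ks ! i}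
         in E \<in> sets M \<and>
            measure M E = (\<Prod>i<length Bs.
               let m = enn2real (ppp_mean alpha lam (Bs ! i))
               in exp (- m) * m ^ (ks ! i) / fact (ks ! i))))"

end

theory Submission imports Defs begin

text \<open>Cover the upper half plane by the boxes [0, e^(n-1)] x [n, n+1]. Any point of box n is
  adjacent to any point of box n+1, since their horizontal distance is at most e^n < e^(n+1/2).
  The intensity measure of box n is at least lam e^(-alpha(n+1)) e^(n-1), which grows
  exponentially when alpha < 1, so the probabilities that box n is empty are summable. By
  Borel-Cantelli almost surely all but finitely many boxes contain a point, and choosing one point
  per box yields an infinite path in the graph.\<close>

definition percolation_box :: "nat \<Rightarrow> (real \<times> real) set" where
  "percolation_box n = cbox (0, real n) (exp (real n - 1), real n + 1)"

lemma mem_percolation_box: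
  "p \<in> percolation_box n \<longleftrightarrow>
     0 \<le> fst p \<and> fst p \<le> exp (real n - 1) \<and> real n \<le> snd p \<and> snd p \<le> real n + 1"
  by (cases p) (auto simp: percolation_box_def cbox_Pair_eq)

lemma percolation_box_borel [measurable]: "percolation_box n \<in> sets borel"
  unfolding percolation_box_def by simp

lemma percolation_box_subset_half_plane: "percolation_box n \<subseteq> UNIV \<times> {0..}"
  by (auto simp: mem_percolation_box)

lemma emeasure_percolation_box: "emeasure lborel (percolation_box n) = ennreal (exp (real n - 1))"
  unfolding percolation_box_def
  by (simp add: emeasure_lborel_cbox_eq Basis_prod_def inner_prod_def)

lemma gamma_adj_consecutive_boxes:
  assumes "p \<in> P \<inter> percolation_box n" "q \<in> P \<inter> percolation_box (Suc n)" "p \<noteq> q"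
  shows "gamma_adj P p q"
proof -
  have "0 \<le> fst p" "fst p \<le> exp (real n)" "0 \<le> fst q" "fst q \<le> exp (real n)"
    using assms(1,2) order_trans[OF _ exp_le_cancel_iff[THEN iffD2]]
    by (auto simp: mem_percolation_box)
  then have "\<bar>fst p - fst q\<bar> \<le> exp (real n)"
    unfolding abs_le_iff by linarith
  also have "\<dots> < exp (real n + 1/2)" by simp
  also have "\<dots> \<le> exp ((snd p + snd q) / 2)"
    using assms(1,2) by (auto simp: mem_percolation_box)
  finally show ?thesis using assms unfolding gamma_adj_def by auto
qed

lemma percolates_if_eventually_points_in_boxes:
  assumes points: "\<And>n. n \<ge> n0 \<Longrightarrow> p n \<in> P \<inter> percolation_box n"
  shows "percolates P"
proof -
  have consecutive: "(gamma_adj P)\<^sup>*\<^sup>* (p n) (p (Suc n))" if "n \<ge> n0" for n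
    using gamma_adj_consecutive_boxes[OF points points] that
    by (cases "p n = p (Suc n)") auto
  have path: "(gamma_adj P)\<^sup>*\<^sup>* (p n0) (p n)" if "n \<ge> n0" for n
    using that
  proof (induction n rule: dec_induct)
    case (step m)
    then show ?case using consecutive[of m] by (meson rtranclp_trans)
  qed simp
  have "infinite (p ` {n0..})"
  proof
    assume "finite (p ` {n0..})"
    then obtain b where b: "\<And>n. n \<ge> n0 \<Longrightarrow> snd (p n) \<le> b"
      using bdd_above_finite[of "snd ` p ` {n0..}"] by (auto simp: bdd_above_def)
    define m where "m = max n0 (nat \<lceil>b\<rceil> + 1)"
    have "real m \<le> snd (p m)" using points[of m] by (simp add: m_def mem_percolation_box)
    moreover have "snd (p m) \<le> b" using b[of m] by (simp add: m_def)
    ultimately show False unfolding m_def by linarith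
  qed
  moreover have "p ` {n0..} \<subseteq> gamma_component P (p n0)"
    using path by (auto simp: gamma_component_def)
  ultimately have "infinite (gamma_component P (p n0))" using finite_subset by blast
  moreover have "p n0 \<in> P" using points by blast
  ultimately show ?thesis unfolding percolates_def by blast
qed

lemma poisson_point_process_void_probability:
  assumes ppp: "poisson_point_process M alpha lam N"
    and B: "B \<in> sets borel" "B \<subseteq> UNIV \<times> {0..}" "ppp_mean alpha lam B < \<infinity>"
  shows "{\<omega>\<in>space M. N \<omega> \<inter> B = {}} \<in> sets M"
    and "measure M {\<omega>\<in>space M. N \<omega> \<inter> B = {}} = exp (- enn2real (ppp_mean alpha lam B))"
proof -
  have "let E = {\<omega>\<in>space M. \<forall>i<length [B]. finite (N \<omega> \<inter> [B] ! i) \<and> card (N \<omega> \<inter> [B] ! i) = [0] ! i}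
        in E \<in> sets M \<and> measure M E = (\<Prod>i<length [B].
             let m = enn2real (ppp_mean alpha lam ([B] ! i))
             in exp (- m) * m ^ ([0] ! i) / fact ([0] ! i))"
    using ppp B unfolding poisson_point_process_def
    by (elim conjE allE[where x = "[B]"] allE[where x = "[0]"] impE)
       (auto simp: disjoint_family_on_def)
  moreover have "{\<omega>\<in>space M. \<forall>i<length [B]. finite (N \<omega> \<inter> [B] ! i) \<and> card (N \<omega> \<inter> [B] ! i) = [0] ! i}
      = {\<omega>\<in>space M. N \<omega> \<inter> B = {}}"
    by auto
  ultimately show "{\<omega>\<in>space M. N \<omega> \<inter> B = {}} \<in> sets M"
    and "measure M {\<omega>\<in>space M. N \<omega> \<inter> B = {}} = exp (- enn2real (ppp_mean alpha lam B))"
    by (simp_all add: Let_def)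
qed

lemma ppp_mean_percolation_box_bounds:
  assumes "0 \<le> alpha" "0 < lam"
  shows "ennreal (lam * exp (- alpha * (real n + 1)) * exp (real n - 1))
           \<le> ppp_mean alpha lam (percolation_box n)"
    and "ppp_mean alpha lam (percolation_box n) \<le> ennreal (lam * exp (real n - 1))"
proof -
  let ?B = "percolation_box n"
  have half_plane: "?B \<inter> (UNIV \<times> {0..}) = ?B"
    using percolation_box_subset_half_plane by blast
  have integral_const: "(\<integral>\<^sup>+ z. ennreal c * indicator ?B z \<partial>lborel) = ennreal (c * exp (real n - 1))"
    if "0 \<le> c" for c
    using that by (simp add: nn_integral_cmult_indicator emeasure_percolation_box ennreal_mult)
  have "ennreal (lam * exp (- alpha * (real n + 1)) * exp (real n - 1))
      = (\<integral>\<^sup>+ z. ennreal (lam * exp (- alpha * (real n + 1))) * indicator ?B z \<partial>lborel)"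
    using assms by (simp add: integral_const)
  also have "\<dots> \<le> ppp_mean alpha lam ?B"
    unfolding ppp_mean_def half_plane using assms
    by (intro nn_integral_mono)
       (auto simp: indicator_def mem_percolation_box intro!: ennreal_leI mult_left_mono)
  finally show "ennreal (lam * exp (- alpha * (real n + 1)) * exp (real n - 1))
      \<le> ppp_mean alpha lam ?B" .
  have "ppp_mean alpha lam ?B \<le> (\<integral>\<^sup>+ z. ennreal lam * indicator ?B z \<partial>lborel)"
    unfolding ppp_mean_def half_plane using assms
    by (intro nn_integral_mono)
       (auto simp: indicator_def mem_percolation_box mult_le_cancel_left1 intro!: ennreal_leI)
  also have "\<dots> = ennreal (lam * exp (real n - 1))"
    using assms by (simp add: integral_const)
  finally show "ppp_mean alpha lam ?B \<le> ennreal (lam * exp (real n - 1))" .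
qed

lemma ppp_mean_percolation_box_finite:
  assumes "0 \<le> alpha" "0 < lam"
  shows "ppp_mean alpha lam (percolation_box n) < \<infinity>"
  using ppp_mean_percolation_box_bounds(2)[OF assms, of n] by (simp add: le_less_trans)

lemma ppp_mean_percolation_box_ge_exponential:
  assumes "0 \<le> alpha" "0 < lam"
  shows "lam * exp (- alpha - 1) * exp ((1 - alpha) * real n)
           \<le> enn2real (ppp_mean alpha lam (percolation_box n))"
proof -
  have "lam * exp (- alpha - 1) * exp ((1 - alpha) * real n)
      = lam * exp (- alpha * (real n + 1)) * exp (real n - 1)"
    by (simp add: exp_add[symmetric] algebra_simps)
  also have "\<dots> = enn2real (ennreal (lam * exp (- alpha * (real n + 1)) * exp (real n - 1)))"
    using assms by simp
  also have "\<dots> \<le> enn2real (ppp_mean alpha lam (percolation_box n))"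
    using ppp_mean_percolation_box_bounds(1) ppp_mean_percolation_box_finite assms
    by (intro enn2real_mono) auto
  finally show ?thesis .
qed

lemma exp_neg_exp_le_power:
  assumes "0 \<le> c"
  shows "exp (- (c * exp (d * real n))) \<le> exp (- (c * d)) ^ n"
proof -
  have "d * real n \<le> exp (d * real n)"
    using exp_ge_add_one_self[of "d * real n"] by linarith
  then have "c * d * real n \<le> c * exp (d * real n)"
    using assms by (simp add: mult.assoc mult_left_mono)
  then show ?thesis by (simp add: exp_of_nat_mult[symmetric] algebra_simps)
qed

lemma poisson_point_process_AE_eventually_box_nonempty:
  assumes "0 < alpha" "alpha < 1" "0 < lam"
    and ppp: "poisson_point_process M alpha lam N"
  shows "AE \<omega> in M. eventually (\<lambda>n. N \<omega> \<inter> percolation_box n \<noteq> {}) sequentially"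
proof -
  interpret prob_space M using ppp unfolding poisson_point_process_def by blast
  define E where "E n = {\<omega>\<in>space M. N \<omega> \<inter> percolation_box n = {}}" for n
  define c where "c = lam * exp (- alpha - 1)"
  define d where "d = 1 - alpha"
  have "c > 0" "d > 0" using assms by (auto simp: c_def d_def)
  have alpha_nonneg: "0 \<le> alpha" using assms by simp
  note mean_finite = ppp_mean_percolation_box_finite[OF alpha_nonneg \<open>0 < lam\<close>]
  note void = poisson_point_process_void_probability[OF ppp percolation_box_borel
      percolation_box_subset_half_plane mean_finite]
  have E_sets: "E n \<in> sets M" for n using void(1) by (simp add: E_def)
  have "measure M (E n) \<le> exp (- (c * d)) ^ n" for n
  proof -
    have "measure M (E n) \<le> exp (- (c * exp (d * real n)))"
      using void(2)[of n] ppp_mean_percolation_box_ge_exponential[OF alpha_nonneg \<open>0 < lam\<close>]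
      by (simp add: E_def c_def d_def)
    also have "\<dots> \<le> exp (- (c * d)) ^ n"
      using \<open>c > 0\<close> by (intro exp_neg_exp_le_power) simp
    finally show ?thesis .
  qed
  then have "summable (\<lambda>n. measure M (E n))"
    using \<open>c > 0\<close> \<open>d > 0\<close>
    by (intro summable_comparison_test'[OF summable_geometric[of "exp (- (c * d))"]]) auto
  then have "AE \<omega> in M. eventually (\<lambda>n. \<omega> \<in> space M - E n) sequentially"
    using E_sets by (intro borel_cantelli_AE1) (auto simp: less_top[symmetric])
  then show ?thesis by (rule AE_mp) (auto simp: E_def elim: eventually_mono)
qed

theorem lemma2p11:
  fixes alpha lam :: real
    and M :: "'a measure"
    and N :: "'a \<Rightarrow> (real \<times> real) set"
  assumes "0 < alpha" and "alpha < 1" and "0 < lam"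
    and "poisson_point_process M alpha lam N"
  shows "AE \<omega> in M. percolates (N \<omega>)"
  using poisson_point_process_AE_eventually_box_nonempty[OF assms]
proof (rule AE_mp, intro AE_I2 impI)
  fix \<omega> assume "eventually (\<lambda>n. N \<omega> \<inter> percolation_box n \<noteq> {}) sequentially"
  then obtain n0 where "\<And>n. n \<ge> n0 \<Longrightarrow> N \<omega> \<inter> percolation_box n \<noteq> {}"
    by (auto simp: eventually_sequentially)
  then have "\<And>n. n \<ge> n0 \<Longrightarrow> (SOME q. q \<in> N \<omega> \<inter> percolation_box n) \<in> N \<omega> \<inter> percolation_box n"
    by (metis ex_in_conv someI)
  then show "percolates (N \<omega>)" by (rule percolates_if_eventually_points_in_boxes)
qed

end
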